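(* Let $\mathbb{C}$ be a pointed protomodular category. Every normal subobject (normal monomorphism) of a proto-complete object of $\mathbb{C}$ is a characteristic monomorphism.
   Context: A pointed category with finite limits is protomodular if the split short five lemma holds. A normal monomorphism is a kernel of some morphism; a protosplit monomorphism is a kernel of a split epimorphism. An object $X$ is proto-complete if every protosplit monomorphism with domain $X$ is a split monomorphism. A monomorphism $m:S\to Y$ is Bourn-normal if there is an equivalence relation $(R,r_1,r_2)$ on $Y$ and $\tilde m:S\times S\to R$ with $r_1\tilde m=m\pi_1$, $r_2\tilde m=m\pi_2$ and the square $r_1\tilde m=m\pi_1$ a pullback. A morphism $u:S\to X$ is a characteristic monomorphism if for every Bourn-normal monomorphism $n:X\to Y$ the composite $nu$ is a Bourn-normal monomorphism. *)

theory Defs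
  imports Main
begin

record ('o, 'a) category =
  Obj  :: "'o set"
  Arr  :: "'a set"
  Dom  :: "'a \<Rightarrow> 'o"
  Cod  :: "'a \<Rightarrow> 'o"
  Id   :: "'o \<Rightarrow> 'a"
  Comp :: "'a \<Rightarrow> 'a \<Rightarrow> 'a"   (* Comp C g f = g \<circ> f, defined when Cod f = Dom g *)

definition hom :: "('o,'a) category \<Rightarrow> 'a \<Rightarrow> 'o \<Rightarrow> 'o \<Rightarrow> bool" where
  "hom C f X Y \<longleftrightarrow> f \<in> Arr C \<and> Dom C f = X \<and> Cod C f = Y"

definition is_category :: "('o,'a) category \<Rightarrow> bool" where
  "is_category C \<longleftrightarrow>
     (\<forall>f \<in> Arr C. Dom C f \<in> Obj C \<and> Cod C f \<in> Obj C) \<and>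
     (\<forall>X \<in> Obj C. hom C (Id C X) X X) \<and>
     (\<forall>f g. f \<in> Arr C \<and> g \<in> Arr C \<and> Cod C f = Dom C g \<longrightarrow>
            hom C (Comp C g f) (Dom C f) (Cod C g)) \<and>
     (\<forall>f \<in> Arr C. Comp C f (Id C (Dom C f)) = f \<and> Comp C (Id C (Cod C f)) f = f) \<and>
     (\<forall>f g h. f \<in> Arr C \<and> g \<in> Arr C \<and> h \<in> Arr C \<and> Cod C f = Dom C g \<and> Cod C g = Dom C h
            \<longrightarrow> Comp C h (Comp C g f) = Comp C (Comp C h g) f)"

definition mono :: "('o,'a) category \<Rightarrow> 'a \<Rightarrow> bool" where
  "mono C m \<longleftrightarrow> m \<in> Arr C \<and>
     (\<forall>x y. x \<in> Arr C \<and> y \<in> Arr C \<and> Cod C x = Dom C m \<and> Cod C y = Dom C m \<and>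
            Dom C x = Dom C y \<and> Comp C m x = Comp C m y \<longrightarrow> x = y)"

definition split_mono :: "('o,'a) category \<Rightarrow> 'a \<Rightarrow> bool" where
  "split_mono C m \<longleftrightarrow> m \<in> Arr C \<and>
     (\<exists>r. hom C r (Cod C m) (Dom C m) \<and> Comp C r m = Id C (Dom C m))"

definition split_epi :: "('o,'a) category \<Rightarrow> 'a \<Rightarrow> bool" where
  "split_epi C p \<longleftrightarrow> p \<in> Arr C \<and>
     (\<exists>s. hom C s (Cod C p) (Dom C p) \<and> Comp C p s = Id C (Cod C p))"

definition iso :: "('o,'a) category \<Rightarrow> 'a \<Rightarrow> bool" where
  "iso C f \<longleftrightarrow> f \<in> Arr C \<and>
     (\<exists>g. hom C g (Cod C f) (Dom C f) \<and> Comp C g f = Id C (Dom C f) \<and> Comp C f g = Id C (Cod C f))"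

definition initial_obj :: "('o,'a) category \<Rightarrow> 'o \<Rightarrow> bool" where
  "initial_obj C Z \<longleftrightarrow> Z \<in> Obj C \<and> (\<forall>X \<in> Obj C. \<exists>!f. hom C f Z X)"

definition terminal_obj :: "('o,'a) category \<Rightarrow> 'o \<Rightarrow> bool" where
  "terminal_obj C T \<longleftrightarrow> T \<in> Obj C \<and> (\<forall>X \<in> Obj C. \<exists>!f. hom C f X T)"

definition zero_obj :: "('o,'a) category \<Rightarrow> 'o \<Rightarrow> bool" where
  "zero_obj C Z \<longleftrightarrow> initial_obj C Z \<and> terminal_obj C Z"

definition pointed :: "('o,'a) category \<Rightarrow> bool" where
  "pointed C \<longleftrightarrow> (\<exists>Z. zero_obj C Z)"

definition zero_arr :: "('o,'a) category \<Rightarrow> 'a \<Rightarrow> bool" where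
  "zero_arr C f \<longleftrightarrow> f \<in> Arr C \<and>
     (\<exists>Z g h. zero_obj C Z \<and> hom C h (Dom C f) Z \<and> hom C g Z (Cod C f) \<and> f = Comp C g h)"

definition is_pullback :: "('o,'a) category \<Rightarrow> 'a \<Rightarrow> 'a \<Rightarrow> 'a \<Rightarrow> 'a \<Rightarrow> bool" where
  "is_pullback C f g p q \<longleftrightarrow>
     f \<in> Arr C \<and> g \<in> Arr C \<and> Cod C f = Cod C g \<and>
     hom C p (Dom C p) (Dom C f) \<and> hom C q (Dom C p) (Dom C g) \<and>
     Comp C f p = Comp C g q \<and>
     (\<forall>T a b. hom C a T (Dom C f) \<and> hom C b T (Dom C g) \<and> Comp C f a = Comp C g b \<longrightarrow>
        (\<exists>!h. hom C h T (Dom C p) \<and> Comp C p h = a \<and> Comp C q h = b))"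

definition has_pullbacks :: "('o,'a) category \<Rightarrow> bool" where
  "has_pullbacks C \<longleftrightarrow>
     (\<forall>f g. f \<in> Arr C \<and> g \<in> Arr C \<and> Cod C f = Cod C g \<longrightarrow> (\<exists>p q. is_pullback C f g p q))"

definition has_finite_limits :: "('o,'a) category \<Rightarrow> bool" where
  "has_finite_limits C \<longleftrightarrow> (\<exists>T. terminal_obj C T) \<and> has_pullbacks C"

definition is_product :: "('o,'a) category \<Rightarrow> 'o \<Rightarrow> 'a \<Rightarrow> 'a \<Rightarrow> 'o \<Rightarrow> 'o \<Rightarrow> bool" where
  "is_product C P p1 p2 A B \<longleftrightarrow>
     hom C p1 P A \<and> hom C p2 P B \<and>
     (\<forall>T a b. hom C a T A \<and> hom C b T B \<longrightarrow>
        (\<exists>!h. hom C h T P \<and> Comp C p1 h = a \<and> Comp C p2 h = b))"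

definition is_kernel :: "('o,'a) category \<Rightarrow> 'a \<Rightarrow> 'a \<Rightarrow> bool" where
  "is_kernel C k f \<longleftrightarrow>
     k \<in> Arr C \<and> f \<in> Arr C \<and> Cod C k = Dom C f \<and> zero_arr C (Comp C f k) \<and>
     (\<forall>T x. hom C x T (Dom C f) \<and> zero_arr C (Comp C f x) \<longrightarrow>
        (\<exists>!h. hom C h T (Dom C k) \<and> Comp C k h = x))"

text \<open>Split short five lemma: given split extensions
  K --k--> A --p--> B (section s) and K' --k'--> A' --p'--> B' (section s'),
  with k, k' kernels of p, p', and a morphism (u, v, w) between them
  (v k = k' u, p' v = w p, v s = s' w), if u and w are isomorphisms, so is v.\<close>
definition protomodular :: "('o,'a) category \<Rightarrow> bool" where
  "protomodular C \<longleftrightarrow>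
     (\<forall>k p s k' p' s' u v w.
        is_kernel C k p \<and> hom C s (Cod C p) (Dom C p) \<and> Comp C p s = Id C (Cod C p) \<and>
        is_kernel C k' p' \<and> hom C s' (Cod C p') (Dom C p') \<and> Comp C p' s' = Id C (Cod C p') \<and>
        hom C u (Dom C k) (Dom C k') \<and> hom C v (Dom C p) (Dom C p') \<and> hom C w (Cod C p) (Cod C p') \<and>
        Comp C v k = Comp C k' u \<and> Comp C p' v = Comp C w p \<and> Comp C v s = Comp C s' w \<and>
        iso C u \<and> iso C w
        \<longrightarrow> iso C v)"

definition normal_mono :: "('o,'a) category \<Rightarrow> 'a \<Rightarrow> bool" where
  "normal_mono C m \<longleftrightarrow> (\<exists>f. is_kernel C m f)"

definition protosplit_mono :: "('o,'a) category \<Rightarrow> 'a \<Rightarrow> bool" where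
  "protosplit_mono C m \<longleftrightarrow> (\<exists>p. split_epi C p \<and> is_kernel C m p)"

definition proto_complete :: "('o,'a) category \<Rightarrow> 'o \<Rightarrow> bool" where
  "proto_complete C X \<longleftrightarrow> X \<in> Obj C \<and>
     (\<forall>m. protosplit_mono C m \<and> Dom C m = X \<longrightarrow> split_mono C m)"

definition equivalence_relation :: "('o,'a) category \<Rightarrow> 'o \<Rightarrow> 'a \<Rightarrow> 'a \<Rightarrow> 'o \<Rightarrow> bool" where
  "equivalence_relation C R r1 r2 Y \<longleftrightarrow>
     hom C r1 R Y \<and> hom C r2 R Y \<and>
     (\<forall>T x y. hom C x T R \<and> hom C y T R \<and> Comp C r1 x = Comp C r1 y \<and> Comp C r2 x = Comp C r2 y
        \<longrightarrow> x = y) \<and>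
     (\<forall>T a. hom C a T Y \<longrightarrow> (\<exists>d. hom C d T R \<and> Comp C r1 d = a \<and> Comp C r2 d = a)) \<and>
     (\<forall>T x. hom C x T R \<longrightarrow>
        (\<exists>y. hom C y T R \<and> Comp C r1 y = Comp C r2 x \<and> Comp C r2 y = Comp C r1 x)) \<and>
     (\<forall>T x y. hom C x T R \<and> hom C y T R \<and> Comp C r2 x = Comp C r1 y \<longrightarrow>
        (\<exists>z. hom C z T R \<and> Comp C r1 z = Comp C r1 x \<and> Comp C r2 z = Comp C r2 y))"

definition bourn_normal :: "('o,'a) category \<Rightarrow> 'a \<Rightarrow> bool" where
  "bourn_normal C m \<longleftrightarrow> mono C m \<and>
     (\<exists>R r1 r2 P \<pi>1 \<pi>2 mt.
        equivalence_relation C R r1 r2 (Cod C m) \<and>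
        is_product C P \<pi>1 \<pi>2 (Dom C m) (Dom C m) \<and>
        hom C mt P R \<and>
        Comp C r1 mt = Comp C m \<pi>1 \<and> Comp C r2 mt = Comp C m \<pi>2 \<and>
        is_pullback C r1 m mt \<pi>1)"

definition characteristic_mono :: "('o,'a) category \<Rightarrow> 'a \<Rightarrow> bool" where
  "characteristic_mono C u \<longleftrightarrow> mono C u \<and>
     (\<forall>n. bourn_normal C n \<and> Dom C n = Cod C u \<longrightarrow> bourn_normal C (Comp C n u))"

end

theory Submission
  imports Defs
begin

text \<open>A Bourn-normal \<open>n : X \<rightarrow> Y\<close> is the zero class of an equivalence relation \<open>R\<close> on \<open>Y\<close>:
  the kernel \<open>k\<close> of the first projection \<open>r\<^sub>1 : R \<rightarrow> Y\<close> satisfies \<open>r\<^sub>2 k = n\<close>. Since \<open>r\<^sub>1\<close> is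
  split by the diagonal \<open>\<delta>\<close>, \<open>k\<close> is protosplit, so for proto-complete \<open>X\<close> it has a retraction
  \<open>\<rho>\<close>. Given a kernel \<open>u : S \<rightarrow> X\<close> of \<open>f\<close>, the part \<open>Q\<close> of \<open>R\<close> on which \<open>f \<rho>\<close> and
  \<open>f \<rho> \<delta> r\<^sub>1\<close> agree is again an equivalence relation on \<open>Y\<close>, with zero class \<open>n u\<close>; hence \<open>n u\<close>
  is Bourn-normal. Symmetry and transitivity of \<open>Q\<close> amount to certain maps into \<open>R\<close> factoring
  through \<open>Q\<close>, and by protomodularity this needs to be checked only on the kernel and on a
  section of a split epimorphism.\<close>

definition is_equalizer :: "('o,'a) category \<Rightarrow> 'a \<Rightarrow> 'a \<Rightarrow> 'a \<Rightarrow> bool" where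
  "is_equalizer C e a b \<longleftrightarrow>
     e \<in> Arr C \<and> hom C a (Cod C e) (Cod C a) \<and> hom C b (Cod C e) (Cod C a) \<and>
     Comp C a e = Comp C b e \<and>
     (\<forall>T x. hom C x T (Cod C e) \<and> Comp C a x = Comp C b x \<longrightarrow>
        (\<exists>!h. hom C h T (Dom C e) \<and> Comp C e h = x))"

lemma ex1_unique: "\<exists>!x. P x \<Longrightarrow> P a \<Longrightarrow> P b \<Longrightarrow> a = b"
  by blast

locale category =
  fixes C :: "('o,'a) category"
  assumes is_category: "is_category C"
begin

abbreviation compose (infixr "\<cdot>" 55) where "g \<cdot> f \<equiv> Comp C g f"

lemma arr_objs: "f \<in> Arr C \<Longrightarrow> Dom C f \<in> Obj C \<and> Cod C f \<in> Obj C"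
  using is_category unfolding is_category_def by blast

lemma hom_objs: "hom C f A B \<Longrightarrow> A \<in> Obj C \<and> B \<in> Obj C"
  unfolding hom_def using arr_objs by blast

lemma hom_arr: "hom C f A B \<Longrightarrow> f \<in> Arr C"
  unfolding hom_def by blast

lemma hom_id: "A \<in> Obj C \<Longrightarrow> hom C (Id C A) A A"
  using is_category unfolding is_category_def by blast

lemma hom_comp: "hom C f A B \<Longrightarrow> hom C g B D \<Longrightarrow> hom C (g \<cdot> f) A D"
  using is_category unfolding is_category_def hom_def by simp

lemma comp_id_right: "hom C f A B \<Longrightarrow> f \<cdot> Id C A = f"
  using is_category unfolding is_category_def hom_def by auto

lemma comp_id_left: "hom C f A B \<Longrightarrow> Id C B \<cdot> f = f"
  using is_category unfolding is_category_def hom_def by auto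

lemma comp_assoc: "hom C f A B \<Longrightarrow> hom C g B D \<Longrightarrow> hom C h D E \<Longrightarrow> (h \<cdot> g) \<cdot> f = h \<cdot> (g \<cdot> f)"
  using is_category unfolding is_category_def hom_def by simp

lemma arr_comp [simp]: "f \<in> Arr C \<Longrightarrow> g \<in> Arr C \<Longrightarrow> Cod C f = Dom C g \<Longrightarrow> g \<cdot> f \<in> Arr C"
  and dom_comp [simp]: "f \<in> Arr C \<Longrightarrow> g \<in> Arr C \<Longrightarrow> Cod C f = Dom C g \<Longrightarrow> Dom C (g \<cdot> f) = Dom C f"
  and cod_comp [simp]: "f \<in> Arr C \<Longrightarrow> g \<in> Arr C \<Longrightarrow> Cod C f = Dom C g \<Longrightarrow> Cod C (g \<cdot> f) = Cod C g"
  using is_category unfolding is_category_def hom_def by blast+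

lemma arr_Id [simp]: "A \<in> Obj C \<Longrightarrow> Id C A \<in> Arr C"
  and dom_Id [simp]: "A \<in> Obj C \<Longrightarrow> Dom C (Id C A) = A"
  and cod_Id [simp]: "A \<in> Obj C \<Longrightarrow> Cod C (Id C A) = A"
  using hom_id unfolding hom_def by auto

lemma comp_Id_left [simp]: "f \<in> Arr C \<Longrightarrow> Cod C f = B \<Longrightarrow> Id C B \<cdot> f = f"
  and comp_Id_right [simp]: "f \<in> Arr C \<Longrightarrow> Dom C f = A \<Longrightarrow> f \<cdot> Id C A = f"
  using comp_id_left comp_id_right unfolding hom_def by auto

lemma comp_assoc_arr [simp]:
  "f \<in> Arr C \<Longrightarrow> g \<in> Arr C \<Longrightarrow> h \<in> Arr C \<Longrightarrow> Cod C f = Dom C g \<Longrightarrow> Cod C g = Dom C h \<Longrightarrow>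
   (h \<cdot> g) \<cdot> f = h \<cdot> (g \<cdot> f)"
  using comp_assoc unfolding hom_def by blast

lemma comp_reassoc:
  "g \<cdot> f = t \<Longrightarrow> f \<in> Arr C \<Longrightarrow> g \<in> Arr C \<Longrightarrow> Cod C f = Dom C g \<Longrightarrow> x \<in> Arr C \<Longrightarrow>
   Cod C x = Dom C f \<Longrightarrow> g \<cdot> (f \<cdot> x) = t \<cdot> x"
  by (metis comp_assoc_arr)

lemma monoI:
  assumes "hom C m A B"
    and "\<And>T h h'. hom C h T A \<Longrightarrow> hom C h' T A \<Longrightarrow> m \<cdot> h = m \<cdot> h' \<Longrightarrow> h = h'"
  shows "mono C m"
  using assms unfolding mono_def hom_def by metis

lemma monoD:
  "mono C m \<Longrightarrow> hom C m A B \<Longrightarrow> hom C h T A \<Longrightarrow> hom C h' T A \<Longrightarrow> m \<cdot> h = m \<cdot> h' \<Longrightarrow> h = h'"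
  unfolding mono_def hom_def by auto

lemma mono_comp:
  assumes m: "mono C m" "hom C m A B" and n: "mono C n" "hom C n B D"
  shows "mono C (n \<cdot> m)"
proof (rule monoI[OF hom_comp[OF m(2) n(2)]])
  fix T h h' assume h: "hom C h T A" and h': "hom C h' T A" and eq: "(n \<cdot> m) \<cdot> h = (n \<cdot> m) \<cdot> h'"
  have "n \<cdot> (m \<cdot> h) = n \<cdot> (m \<cdot> h')"
    using eq comp_assoc[OF h m(2) n(2)] comp_assoc[OF h' m(2) n(2)] by simp
  then have "m \<cdot> h = m \<cdot> h'"
    by (rule monoD[OF n hom_comp[OF h m(2)] hom_comp[OF h' m(2)]])
  then show "h = h'"
    by (rule monoD[OF m h h'])
qed

lemma iso_Id: "A \<in> Obj C \<Longrightarrow> iso C (Id C A)"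
  unfolding iso_def by (rule conjI, simp, rule exI[of _ "Id C A"], simp add: hom_id)

lemma is_productD:
  assumes "is_product C P p1 p2 A B"
  shows "hom C p1 P A" "hom C p2 P B"
    "\<And>T a b. hom C a T A \<Longrightarrow> hom C b T B \<Longrightarrow> \<exists>h. hom C h T P \<and> p1 \<cdot> h = a \<and> p2 \<cdot> h = b"
    "\<And>T h h'. hom C h T P \<Longrightarrow> hom C h' T P \<Longrightarrow> p1 \<cdot> h = p1 \<cdot> h' \<Longrightarrow> p2 \<cdot> h = p2 \<cdot> h' \<Longrightarrow> h = h'"
proof -
  show p1: "hom C p1 P A" and p2: "hom C p2 P B"
    using assms unfolding is_product_def by blast+
  have U: "\<And>T a b. hom C a T A \<Longrightarrow> hom C b T B \<Longrightarrow> \<exists>!h. hom C h T P \<and> p1 \<cdot> h = a \<and> p2 \<cdot> h = b"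
    using assms unfolding is_product_def by blast
  show "\<And>T a b. hom C a T A \<Longrightarrow> hom C b T B \<Longrightarrow> \<exists>h. hom C h T P \<and> p1 \<cdot> h = a \<and> p2 \<cdot> h = b"
    using U by blast
  show "h = h'" if "hom C h T P" "hom C h' T P" "p1 \<cdot> h = p1 \<cdot> h'" "p2 \<cdot> h = p2 \<cdot> h'" for T h h'
    by (rule ex1_unique[OF U[OF hom_comp[OF that(1) p1] hom_comp[OF that(1) p2]]])
      (use that in simp_all)
qed

lemma is_pullbackD:
  assumes "is_pullback C f g p q" and "Dom C f = A" "Dom C g = B" "Dom C p = P"
  shows "hom C p P A" "hom C q P B" "f \<cdot> p = g \<cdot> q"
    "\<And>T a b. hom C a T A \<Longrightarrow> hom C b T B \<Longrightarrow> f \<cdot> a = g \<cdot> b \<Longrightarrow> \<exists>h. hom C h T P \<and> p \<cdot> h = a \<and> q \<cdot> h = b"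
    "\<And>T h h'. hom C h T P \<Longrightarrow> hom C h' T P \<Longrightarrow> p \<cdot> h = p \<cdot> h' \<Longrightarrow> q \<cdot> h = q \<cdot> h' \<Longrightarrow> h = h'"
proof -
  show p: "hom C p P A" and q: "hom C q P B" and "f \<cdot> p = g \<cdot> q"
    using assms unfolding is_pullback_def by auto
  have U: "\<And>T a b. hom C a T A \<Longrightarrow> hom C b T B \<Longrightarrow> f \<cdot> a = g \<cdot> b \<Longrightarrow>
      \<exists>!h. hom C h T P \<and> p \<cdot> h = a \<and> q \<cdot> h = b"
    using assms unfolding is_pullback_def by blast
  show "\<And>T a b. hom C a T A \<Longrightarrow> hom C b T B \<Longrightarrow> f \<cdot> a = g \<cdot> b \<Longrightarrow> \<exists>h. hom C h T P \<and> p \<cdot> h = a \<and> q \<cdot> h = b"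
    using U by blast
  show "h = h'" if "hom C h T P" "hom C h' T P" "p \<cdot> h = p \<cdot> h'" "q \<cdot> h = q \<cdot> h'" for T h h'
  proof -
    have "f \<cdot> (p \<cdot> h) = g \<cdot> (q \<cdot> h)"
      using \<open>f \<cdot> p = g \<cdot> q\<close> that(1) p q assms(1) unfolding is_pullback_def hom_def
      by (metis comp_reassoc)
    then show ?thesis
      by (rule ex1_unique[OF U[OF hom_comp[OF that(1) p] hom_comp[OF that(1) q]]])
        (use that in simp_all)
  qed
qed

lemma is_pullbackI:
  assumes f: "hom C f A D" and g: "hom C g B D" and p: "hom C p P A" and q: "hom C q P B"
    and commutes: "f \<cdot> p = g \<cdot> q"
    and factor: "\<And>T a b. hom C a T A \<Longrightarrow> hom C b T B \<Longrightarrow> f \<cdot> a = g \<cdot> b \<Longrightarrow>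
      \<exists>h. hom C h T P \<and> p \<cdot> h = a \<and> q \<cdot> h = b"
    and unique: "\<And>T h h'. hom C h T P \<Longrightarrow> hom C h' T P \<Longrightarrow> p \<cdot> h = p \<cdot> h' \<Longrightarrow> q \<cdot> h = q \<cdot> h' \<Longrightarrow> h = h'"
  shows "is_pullback C f g p q"
proof -
  have "Dom C f = A" "Dom C g = B" "Dom C p = P" "Cod C f = Cod C g" "f \<in> Arr C" "g \<in> Arr C"
    using f g p unfolding hom_def by auto
  then show ?thesis
    unfolding is_pullback_def using p q commutes factor unique by metis
qed

lemma equivalence_relationD:
  assumes "equivalence_relation C R r1 r2 Y"
  shows "hom C r1 R Y" "hom C r2 R Y"
    "\<And>T x y. hom C x T R \<Longrightarrow> hom C y T R \<Longrightarrow> r1 \<cdot> x = r1 \<cdot> y \<Longrightarrow> r2 \<cdot> x = r2 \<cdot> y \<Longrightarrow> x = y"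
    "\<And>T a. hom C a T Y \<Longrightarrow> \<exists>d. hom C d T R \<and> r1 \<cdot> d = a \<and> r2 \<cdot> d = a"
    "\<And>T x. hom C x T R \<Longrightarrow> \<exists>y. hom C y T R \<and> r1 \<cdot> y = r2 \<cdot> x \<and> r2 \<cdot> y = r1 \<cdot> x"
    "\<And>T x y. hom C x T R \<Longrightarrow> hom C y T R \<Longrightarrow> r2 \<cdot> x = r1 \<cdot> y \<Longrightarrow>
      \<exists>z. hom C z T R \<and> r1 \<cdot> z = r1 \<cdot> x \<and> r2 \<cdot> z = r2 \<cdot> y"
  using assms unfolding equivalence_relation_def by blast+

lemma equivalence_relationI:
  assumes "hom C r1 R Y" "hom C r2 R Y"
    "\<And>T x y. hom C x T R \<Longrightarrow> hom C y T R \<Longrightarrow> r1 \<cdot> x = r1 \<cdot> y \<Longrightarrow> r2 \<cdot> x = r2 \<cdot> y \<Longrightarrow> x = y"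
    "\<And>T a. hom C a T Y \<Longrightarrow> \<exists>d. hom C d T R \<and> r1 \<cdot> d = a \<and> r2 \<cdot> d = a"
    "\<And>T x. hom C x T R \<Longrightarrow> \<exists>y. hom C y T R \<and> r1 \<cdot> y = r2 \<cdot> x \<and> r2 \<cdot> y = r1 \<cdot> x"
    "\<And>T x y. hom C x T R \<Longrightarrow> hom C y T R \<Longrightarrow> r2 \<cdot> x = r1 \<cdot> y \<Longrightarrow>
      \<exists>z. hom C z T R \<and> r1 \<cdot> z = r1 \<cdot> x \<and> r2 \<cdot> z = r2 \<cdot> y"
  shows "equivalence_relation C R r1 r2 Y"
  using assms unfolding equivalence_relation_def by blast

lemma is_equalizerD:
  assumes eq: "is_equalizer C e a b" and "Dom C e = E" "Cod C e = A" "Cod C a = B"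
  shows "hom C e E A" "hom C a A B" "hom C b A B" "a \<cdot> e = b \<cdot> e"
    "\<And>T x. hom C x T A \<Longrightarrow> a \<cdot> x = b \<cdot> x \<Longrightarrow> \<exists>h. hom C h T E \<and> e \<cdot> h = x"
    "\<And>T h h'. hom C h T E \<Longrightarrow> hom C h' T E \<Longrightarrow> e \<cdot> h = e \<cdot> h' \<Longrightarrow> h = h'"
proof -
  have equalizer: "e \<in> Arr C" "hom C a (Cod C e) (Cod C a)" "hom C b (Cod C e) (Cod C a)" "a \<cdot> e = b \<cdot> e"
    "\<And>T x. hom C x T (Cod C e) \<Longrightarrow> a \<cdot> x = b \<cdot> x \<Longrightarrow> \<exists>!h. hom C h T (Dom C e) \<and> e \<cdot> h = x"
    using eq unfolding is_equalizer_def by blast+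
  show e: "hom C e E A"
    using equalizer(1) assms(2,3) unfolding hom_def by blast
  show a: "hom C a A B" and b: "hom C b A B" and ae: "a \<cdot> e = b \<cdot> e"
    using equalizer(2-4) unfolding assms(2-4) .
  have U: "\<And>T x. hom C x T A \<Longrightarrow> a \<cdot> x = b \<cdot> x \<Longrightarrow> \<exists>!h. hom C h T E \<and> e \<cdot> h = x"
    using equalizer(5) unfolding assms(2,3) .
  then show "\<And>T x. hom C x T A \<Longrightarrow> a \<cdot> x = b \<cdot> x \<Longrightarrow> \<exists>h. hom C h T E \<and> e \<cdot> h = x"
    by blast
  show "h = h'" if h: "hom C h T E" "hom C h' T E" and eq: "e \<cdot> h = e \<cdot> h'" for T h h'
  proof -
    have "a \<cdot> (e \<cdot> h) = b \<cdot> (e \<cdot> h)"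
      using comp_assoc[OF h(1) e a] comp_assoc[OF h(1) e b] ae by simp
    from U[OF hom_comp[OF h(1) e] this] show ?thesis
      by (rule ex1_unique) (use h eq in simp_all)
  qed
qed

lemma is_equalizerI:
  assumes e: "hom C e E A" and a: "hom C a A B" and b: "hom C b A B" and ae: "a \<cdot> e = b \<cdot> e"
    and factor: "\<And>T x. hom C x T A \<Longrightarrow> a \<cdot> x = b \<cdot> x \<Longrightarrow> \<exists>h. hom C h T E \<and> e \<cdot> h = x"
    and cancel: "\<And>T h h'. hom C h T E \<Longrightarrow> hom C h' T E \<Longrightarrow> e \<cdot> h = e \<cdot> h' \<Longrightarrow> h = h'"
  shows "is_equalizer C e a b"
  unfolding is_equalizer_def
proof (intro conjI allI impI)
  have dom_cod: "Dom C e = E" "Cod C e = A" "Cod C a = B"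
    using e a unfolding hom_def by auto
  show "e \<in> Arr C" "hom C a (Cod C e) (Cod C a)" "hom C b (Cod C e) (Cod C a)" "a \<cdot> e = b \<cdot> e"
    unfolding dom_cod using hom_arr[OF e] a b ae by auto
  fix T x assume "hom C x T (Cod C e) \<and> a \<cdot> x = b \<cdot> x"
  then obtain h where h: "hom C h T E" "e \<cdot> h = x"
    using factor unfolding dom_cod by blast
  then show "\<exists>!h. hom C h T (Dom C e) \<and> e \<cdot> h = x"
    unfolding dom_cod using cancel[OF _ h(1)] by auto
qed

end

locale pointed_category = category +
  assumes pointed: "pointed C"
begin

definition zobj where "zobj = (SOME Z. zero_obj C Z)"
definition to_zero where "to_zero A = (THE h. hom C h A zobj)"
definition from_zero where "from_zero B = (THE g. hom C g zobj B)"
definition zero where "zero A B = from_zero B \<cdot> to_zero A"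

lemma zero_obj_zobj: "zero_obj C zobj"
  using pointed unfolding pointed_def zobj_def by (rule someI_ex)

lemma ex1_to_zobj: "A \<in> Obj C \<Longrightarrow> \<exists>!h. hom C h A zobj"
  using zero_obj_zobj unfolding zero_obj_def terminal_obj_def by blast

lemma ex1_from_zobj: "B \<in> Obj C \<Longrightarrow> \<exists>!g. hom C g zobj B"
  using zero_obj_zobj unfolding zero_obj_def initial_obj_def by blast

lemma to_zero: "A \<in> Obj C \<Longrightarrow> hom C (to_zero A) A zobj"
  unfolding to_zero_def by (rule theI'[OF ex1_to_zobj])

lemma to_zero_unique: "hom C h A zobj \<Longrightarrow> h = to_zero A"
  using to_zero ex1_to_zobj hom_objs by blast

lemma from_zero: "B \<in> Obj C \<Longrightarrow> hom C (from_zero B) zobj B"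
  unfolding from_zero_def by (rule theI'[OF ex1_from_zobj])

lemma from_zero_unique: "hom C g zobj B \<Longrightarrow> g = from_zero B"
  using from_zero ex1_from_zobj hom_objs by blast

lemma hom_zero: "A \<in> Obj C \<Longrightarrow> B \<in> Obj C \<Longrightarrow> hom C (zero A B) A B"
  unfolding zero_def using to_zero from_zero hom_comp by blast

lemma zero_comp:
  assumes f: "hom C f A B" and D: "D \<in> Obj C"
  shows "zero B D \<cdot> f = zero A D"
proof -
  have B: "B \<in> Obj C"
    using hom_objs[OF f] by blast
  have "zero B D \<cdot> f = from_zero D \<cdot> (to_zero B \<cdot> f)"
    unfolding zero_def using comp_assoc[OF f to_zero[OF B] from_zero[OF D]] .
  then show ?thesis
    unfolding zero_def using to_zero_unique[OF hom_comp[OF f to_zero[OF B]]] by simp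
qed

lemma comp_zero:
  assumes g: "hom C g B D" and A: "A \<in> Obj C"
  shows "g \<cdot> zero A B = zero A D"
proof -
  have B: "B \<in> Obj C"
    using hom_objs[OF g] by blast
  have "g \<cdot> zero A B = (g \<cdot> from_zero B) \<cdot> to_zero A"
    unfolding zero_def using comp_assoc[OF to_zero[OF A] from_zero[OF B] g] by simp
  then show ?thesis
    unfolding zero_def using from_zero_unique[OF hom_comp[OF from_zero[OF B] g]] by simp
qed

lemma arr_zero [simp]: "A \<in> Obj C \<Longrightarrow> B \<in> Obj C \<Longrightarrow> zero A B \<in> Arr C"
  and dom_zero [simp]: "A \<in> Obj C \<Longrightarrow> B \<in> Obj C \<Longrightarrow> Dom C (zero A B) = A"
  and cod_zero [simp]: "A \<in> Obj C \<Longrightarrow> B \<in> Obj C \<Longrightarrow> Cod C (zero A B) = B"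
  using hom_zero unfolding hom_def by blast+

lemma zero_comp_arr [simp]: "f \<in> Arr C \<Longrightarrow> Cod C f = B \<Longrightarrow> D \<in> Obj C \<Longrightarrow> zero B D \<cdot> f = zero (Dom C f) D"
  and comp_zero_arr [simp]: "g \<in> Arr C \<Longrightarrow> Dom C g = B \<Longrightarrow> A \<in> Obj C \<Longrightarrow> g \<cdot> zero A B = zero A (Cod C g)"
  using zero_comp[of f "Dom C f" B D] comp_zero[of g B "Cod C g" A] unfolding hom_def by blast+

lemma zero_arr_iff: "hom C f A B \<Longrightarrow> zero_arr C f \<longleftrightarrow> f = zero A B"
proof
  assume f: "hom C f A B" and "zero_arr C f"
  then obtain Z g h where Z: "zero_obj C Z" and h: "hom C h A Z" and g: "hom C g Z B"
    and f_eq: "f = g \<cdot> h"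
    unfolding zero_arr_def hom_def by blast
  have Z_obj: "Z \<in> Obj C"
    using hom_objs[OF h] by blast
  obtain i j where i: "hom C i Z zobj" and j: "hom C j zobj Z"
    using to_zero from_zero Z_obj by blast
  have "j \<cdot> i = Id C Z"
    using Z Z_obj hom_comp[OF i j] hom_id unfolding zero_obj_def initial_obj_def by blast
  then have "f = (g \<cdot> j) \<cdot> (i \<cdot> h)"
    using f_eq comp_id_left[OF h] comp_assoc[OF h i j] comp_assoc[OF hom_comp[OF h i] j g] by simp
  then show "f = zero A B"
    unfolding zero_def
    using to_zero_unique[OF hom_comp[OF h i]] from_zero_unique[OF hom_comp[OF j g]] by simp
next
  assume f: "hom C f A B" and "f = zero A B"
  moreover have "A \<in> Obj C" "B \<in> Obj C"
    using hom_objs[OF f] by auto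
  ultimately show "zero_arr C f"
    unfolding zero_arr_def zero_def
    using zero_obj_zobj to_zero from_zero hom_arr[OF f] f unfolding hom_def by metis
qed

lemma is_kernelD:
  assumes "is_kernel C k f" and "Dom C k = K" "Dom C f = A" "Cod C f = B"
  shows "hom C k K A" "hom C f A B" "f \<cdot> k = zero K B"
    "\<And>T x. hom C x T A \<Longrightarrow> f \<cdot> x = zero T B \<Longrightarrow> \<exists>h. hom C h T K \<and> k \<cdot> h = x"
    "\<And>T h h'. hom C h T K \<Longrightarrow> hom C h' T K \<Longrightarrow> k \<cdot> h = k \<cdot> h' \<Longrightarrow> h = h'"
proof -
  have kernel: "k \<in> Arr C" "f \<in> Arr C" "Cod C k = Dom C f" "zero_arr C (f \<cdot> k)"
    "\<And>T x. hom C x T A \<Longrightarrow> zero_arr C (f \<cdot> x) \<Longrightarrow> \<exists>!h. hom C h T K \<and> k \<cdot> h = x"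
    using assms(1) unfolding is_kernel_def assms(2,3)[symmetric] by blast+
  show k: "hom C k K A" and f: "hom C f A B"
    using kernel(1-3) assms(2-4) unfolding hom_def by auto
  have B: "B \<in> Obj C"
    using hom_objs[OF f] by blast
  show fk: "f \<cdot> k = zero K B"
    using kernel(4) zero_arr_iff[OF hom_comp[OF k f]] by blast
  have U: "\<exists>!h. hom C h T K \<and> k \<cdot> h = x" if x: "hom C x T A" and "f \<cdot> x = zero T B" for T x
    using kernel(5)[OF x] zero_arr_iff[OF hom_comp[OF x f]] that(2) by blast
  then show "\<And>T x. hom C x T A \<Longrightarrow> f \<cdot> x = zero T B \<Longrightarrow> \<exists>h. hom C h T K \<and> k \<cdot> h = x"
    by blast
  show "h = h'" if h: "hom C h T K" "hom C h' T K" and eq: "k \<cdot> h = k \<cdot> h'" for T h h'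
  proof -
    have "f \<cdot> (k \<cdot> h) = zero T B"
      using comp_assoc[OF h(1) k f] fk zero_comp[OF h(1) B] by simp
    from U[OF hom_comp[OF h(1) k] this] show ?thesis
      by (rule ex1_unique) (use h eq in simp_all)
  qed
qed

lemma is_kernelI:
  assumes k: "hom C k K A" and f: "hom C f A B" and fk: "f \<cdot> k = zero K B"
    and factor: "\<And>T x. hom C x T A \<Longrightarrow> f \<cdot> x = zero T B \<Longrightarrow> \<exists>h. hom C h T K \<and> k \<cdot> h = x"
    and cancel: "\<And>T h h'. hom C h T K \<Longrightarrow> hom C h' T K \<Longrightarrow> k \<cdot> h = k \<cdot> h' \<Longrightarrow> h = h'"
  shows "is_kernel C k f"
  unfolding is_kernel_def
proof (intro conjI allI impI)
  show "k \<in> Arr C" "f \<in> Arr C" "Cod C k = Dom C f"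
    using k f unfolding hom_def by auto
  show "zero_arr C (f \<cdot> k)"
    using zero_arr_iff[OF hom_comp[OF k f]] fk by blast
  fix T x assume "hom C x T (Dom C f) \<and> zero_arr C (f \<cdot> x)"
  then have x: "hom C x T A" and "f \<cdot> x = zero T B"
    using f zero_arr_iff[OF hom_comp[OF _ f]] unfolding hom_def by auto
  then obtain h where h: "hom C h T K" "k \<cdot> h = x"
    using factor by blast
  have "Dom C k = K"
    using k unfolding hom_def by simp
  then show "\<exists>!h. hom C h T (Dom C k) \<and> k \<cdot> h = x"
    using h cancel[OF _ h(1)] by auto
qed

lemma kernel_mono:
  assumes "is_kernel C k f"
  shows "mono C k"
  by (rule monoI[OF is_kernelD(1)[OF assms refl refl refl]])
    (rule is_kernelD(5)[OF assms refl refl refl])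

lemma kernel_factor_through_mono:
  assumes k: "is_kernel C k p" "hom C k K A" and p: "hom C p A B"
    and e: "mono C e" "hom C e E A" and k': "hom C k' K E" "e \<cdot> k' = k"
  shows "is_kernel C k' (p \<cdot> e)"
proof -
  have "Dom C k = K" "Dom C p = A" "Cod C p = B"
    using k(2) p unfolding hom_def by auto
  note kernel = is_kernelD[OF k(1) this]
  note arrs = e(2)[unfolded hom_def] p[unfolded hom_def] k'(1)[unfolded hom_def] k(2)[unfolded hom_def]
  show ?thesis
  proof (rule is_kernelI[OF k'(1) hom_comp[OF e(2) p]])
    show "(p \<cdot> e) \<cdot> k' = zero K B"
      using k'(2) kernel(3) arrs by simp
  next
    fix T x assume x: "hom C x T E" and x0: "(p \<cdot> e) \<cdot> x = zero T B"
    then obtain h where h: "hom C h T K" "k \<cdot> h = e \<cdot> x"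
      using kernel(4)[OF hom_comp[OF x e(2)]] arrs by (auto simp: hom_def)
    have "e \<cdot> (k' \<cdot> h) = e \<cdot> x"
      using h arrs by (simp add: comp_reassoc[OF k'(2)] hom_def)
    then have "k' \<cdot> h = x"
      by (rule monoD[OF e hom_comp[OF h(1) k'(1)] x])
    then show "\<exists>h. hom C h T K \<and> k' \<cdot> h = x"
      using h(1) by blast
  next
    fix T h h' assume h: "hom C h T K" and h': "hom C h' T K" and eq: "k' \<cdot> h = k' \<cdot> h'"
    have "k \<cdot> h = k \<cdot> h'"
      using arg_cong[OF eq, of "\<lambda>x. e \<cdot> x"] h h' arrs by (simp add: comp_reassoc[OF k'(2)] hom_def)
    then show "h = h'"
      by (rule kernel(5)[OF h h'])
  qed
qed

lemma product_kernel:
  assumes P: "is_product C P p1 p2 A B" and j: "hom C j B P"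
    and j1: "p1 \<cdot> j = zero B A" and j2: "p2 \<cdot> j = Id C B"
  shows "is_kernel C j p1"
proof -
  note prod = is_productD[OF P]
  have A: "A \<in> Obj C"
    using hom_objs[OF prod(1)] by blast
  note arrs = prod(1,2)[unfolded hom_def] j[unfolded hom_def]
  show ?thesis
  proof (rule is_kernelI[OF j prod(1) j1])
    fix T x assume x: "hom C x T P" and x1: "p1 \<cdot> x = zero T A"
    have "j \<cdot> (p2 \<cdot> x) = x"
    proof (rule prod(4)[OF hom_comp[OF hom_comp[OF x prod(2)] j] x])
      show "p1 \<cdot> (j \<cdot> (p2 \<cdot> x)) = p1 \<cdot> x"
        using x x1 arrs A by (simp add: comp_reassoc[OF j1] hom_def)
      show "p2 \<cdot> (j \<cdot> (p2 \<cdot> x)) = p2 \<cdot> x"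
        using x arrs by (simp add: comp_reassoc[OF j2] hom_def)
    qed
    then show "\<exists>h. hom C h T B \<and> j \<cdot> h = x"
      using hom_comp[OF x prod(2)] by blast
  next
    fix T h h' assume h: "hom C h T B" and h': "hom C h' T B" and eq: "j \<cdot> h = j \<cdot> h'"
    have "(p2 \<cdot> j) \<cdot> h = (p2 \<cdot> j) \<cdot> h'"
      using eq comp_assoc[OF h j prod(2)] comp_assoc[OF h' j prod(2)] by simp
    then show "h = h'"
      using comp_id_left[OF h] comp_id_left[OF h'] j2 by simp
  qed
qed

lemma pullback_kernel_stable:
  assumes pb: "is_pullback C g q w1 w2" and g: "hom C g A' D" and q: "hom C q A D"
    and W: "Dom C w1 = W" and k: "is_kernel C k q" "hom C k K A"
    and kW: "hom C kW K W" "w1 \<cdot> kW = zero K A'" "w2 \<cdot> kW = k"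
  shows "is_kernel C kW w1"
proof -
  have dom_cod: "Dom C g = A'" "Dom C q = A" "Cod C q = D" "Dom C k = K"
    using g q k(2) unfolding hom_def by auto
  note pullback = is_pullbackD[OF pb dom_cod(1,2) W]
  note kernel = is_kernelD[OF k(1) dom_cod(4,2,3)]
  have objs: "A' \<in> Obj C" "D \<in> Obj C"
    using hom_objs[OF g] by auto
  note arrs = g[unfolded hom_def] q[unfolded hom_def] pullback(1,2)[unfolded hom_def]
    kW(1)[unfolded hom_def] k(2)[unfolded hom_def]
  show ?thesis
  proof (rule is_kernelI[OF kW(1) pullback(1) kW(2)])
    fix T x assume x: "hom C x T W" and x1: "w1 \<cdot> x = zero T A'"
    have "q \<cdot> (w2 \<cdot> x) = g \<cdot> (w1 \<cdot> x)"
      using x arrs by (simp add: comp_reassoc[OF pullback(3)[symmetric]] hom_def)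
    also have "\<dots> = zero T D"
      using x1 x arrs objs hom_objs[OF x] by (simp add: hom_def)
    finally obtain s where s: "hom C s T K" "k \<cdot> s = w2 \<cdot> x"
      using kernel(4)[OF hom_comp[OF x pullback(2)]] by blast
    have "kW \<cdot> s = x"
    proof (rule pullback(5)[OF hom_comp[OF s(1) kW(1)] x])
      show "w1 \<cdot> (kW \<cdot> s) = w1 \<cdot> x"
        using s x1 arrs objs hom_objs[OF x] by (simp add: comp_reassoc[OF kW(2)] hom_def)
      show "w2 \<cdot> (kW \<cdot> s) = w2 \<cdot> x"
        using s arrs by (simp add: comp_reassoc[OF kW(3)] hom_def)
    qed
    then show "\<exists>h. hom C h T K \<and> kW \<cdot> h = x"
      using s(1) by blast
  next
    fix T h h' assume h: "hom C h T K" and h': "hom C h' T K" and eq: "kW \<cdot> h = kW \<cdot> h'"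
    have "k \<cdot> h = k \<cdot> h'"
      using arg_cong[OF eq, of "\<lambda>x. w2 \<cdot> x"] h h' arrs by (simp add: comp_reassoc[OF kW(3)] hom_def)
    then show "h = h'"
      using kernel(5)[OF h h'] by blast
  qed
qed

lemma zero_class_related:
  assumes R: "equivalence_relation C R r1 r2 Y" and k: "hom C k X R"
    and k1: "r1 \<cdot> k = zero X Y" and k2: "r2 \<cdot> k = n"
    and a: "hom C a T X" and b: "hom C b T X"
  obtains z where "hom C z T R" "r1 \<cdot> z = n \<cdot> a" "r2 \<cdot> z = n \<cdot> b"
proof -
  note rel = equivalence_relationD[OF R]
  have Y: "Y \<in> Obj C"
    using hom_objs[OF rel(1)] by blast
  have in_class: "r1 \<cdot> (k \<cdot> c) = zero T Y" "r2 \<cdot> (k \<cdot> c) = n \<cdot> c" if c: "hom C c T X" for c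
    using comp_assoc[OF c k rel(1)] comp_assoc[OF c k rel(2)] k1 k2 zero_comp[OF c Y] by simp_all
  obtain y where y: "hom C y T R" "r1 \<cdot> y = n \<cdot> a" "r2 \<cdot> y = zero T Y"
    using rel(5)[OF hom_comp[OF a k]] in_class[OF a] by auto
  obtain z where "hom C z T R" "r1 \<cdot> z = r1 \<cdot> y" "r2 \<cdot> z = r2 \<cdot> (k \<cdot> b)"
    using rel(6)[OF y(1) hom_comp[OF b k]] y(3) in_class[OF b] by auto
  then show thesis
    using that y(2) in_class[OF b] by simp
qed

lemma zero_class_pullback:
  assumes R: "equivalence_relation C R r1 r2 Y" and m: "mono C m" "hom C m S Y"
    and k: "is_kernel C k r1" "hom C k S R" and k2: "r2 \<cdot> k = m"
    and P: "is_product C P p1 p2 S S"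
    and t: "hom C t P R" "r1 \<cdot> t = m \<cdot> p1" "r2 \<cdot> t = m \<cdot> p2"
  shows "is_pullback C r1 m t p1"
proof -
  note rel = equivalence_relationD[OF R]
  note prod = is_productD[OF P]
  have Y: "Y \<in> Obj C"
    using hom_objs[OF m(2)] by blast
  have "Dom C k = S" "Dom C r1 = R" "Cod C r1 = Y"
    using k(2) rel(1) unfolding hom_def by auto
  note kernel = is_kernelD[OF k(1) this]
  note arrs = m(2)[unfolded hom_def] k(2)[unfolded hom_def] rel(1,2)[unfolded hom_def]
    prod(1,2)[unfolded hom_def] t(1)[unfolded hom_def]
  show ?thesis
  proof (rule is_pullbackI[OF rel(1) m(2) t(1) prod(1) t(2)])
    fix T a b assume a: "hom C a T R" and b: "hom C b T S" and ab: "r1 \<cdot> a = m \<cdot> b"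
    have "r2 \<cdot> (k \<cdot> b) = r1 \<cdot> a"
      using b arrs ab by (simp add: comp_reassoc[OF k2] hom_def)
    then obtain w where w: "hom C w T R" "r1 \<cdot> w = r1 \<cdot> (k \<cdot> b)" "r2 \<cdot> w = r2 \<cdot> a"
      using rel(6)[OF hom_comp[OF b k(2)] a] by blast
    have "r1 \<cdot> w = zero T Y"
      using w(2) b arrs Y by (simp add: comp_reassoc[OF kernel(3)] hom_def)
    then obtain s where s: "hom C s T S" "k \<cdot> s = w"
      using kernel(4)[OF w(1)] by blast
    obtain h where h: "hom C h T P" "p1 \<cdot> h = b" "p2 \<cdot> h = s"
      using prod(3)[OF b s(1)] by blast
    have "t \<cdot> h = a"
    proof (rule rel(3)[OF hom_comp[OF h(1) t(1)] a])
      show "r1 \<cdot> (t \<cdot> h) = r1 \<cdot> a"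
        using h ab arrs by (simp add: comp_reassoc[OF t(2)] hom_def)
      have "r2 \<cdot> (k \<cdot> s) = m \<cdot> s"
        using s(1) arrs by (simp add: comp_reassoc[OF k2] hom_def)
      then show "r2 \<cdot> (t \<cdot> h) = r2 \<cdot> a"
        using h s w(3) arrs by (simp add: comp_reassoc[OF t(3)] hom_def)
    qed
    then show "\<exists>h. hom C h T P \<and> t \<cdot> h = a \<and> p1 \<cdot> h = b"
      using h by blast
  next
    fix T h h' assume h: "hom C h T P" and h': "hom C h' T P"
      and eq1: "t \<cdot> h = t \<cdot> h'" and eq2: "p1 \<cdot> h = p1 \<cdot> h'"
    have "m \<cdot> (p2 \<cdot> h) = m \<cdot> (p2 \<cdot> h')"
      using arg_cong[OF eq1, of "\<lambda>x. r2 \<cdot> x"] h h' arrs by (simp add: comp_reassoc[OF t(3)] hom_def)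
    then have "p2 \<cdot> h = p2 \<cdot> h'"
      by (rule monoD[OF m hom_comp[OF h prod(2)] hom_comp[OF h' prod(2)]])
    then show "h = h'"
      by (rule prod(4)[OF h h' eq2])
  qed
qed

lemma pullback_leg_kernel:
  assumes pb: "is_pullback C f g p q" and f: "hom C f A D" and g: "hom C g B D" and P: "Dom C p = P"
    and j: "is_kernel C j q" "hom C j K P"
  shows "is_kernel C (p \<cdot> j) f"
proof -
  have dom_cod: "Dom C f = A" "Dom C g = B" "Dom C j = K"
    using f g j(2) unfolding hom_def by auto
  note pullback = is_pullbackD[OF pb dom_cod(1,2) P]
  have "Dom C q = P" "Cod C q = B"
    using pullback(2) unfolding hom_def by auto
  note kernel = is_kernelD[OF j(1) dom_cod(3) this]
  have objs: "B \<in> Obj C" "D \<in> Obj C" "K \<in> Obj C"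
    using hom_objs[OF g] hom_objs[OF j(2)] by auto
  note arrs = f[unfolded hom_def] g[unfolded hom_def] pullback(1,2)[unfolded hom_def] j(2)[unfolded hom_def]
  show ?thesis
  proof (rule is_kernelI[OF hom_comp[OF j(2) pullback(1)] f])
    show "f \<cdot> (p \<cdot> j) = zero K D"
      using kernel(3) arrs objs by (simp add: comp_reassoc[OF pullback(3)])
  next
    fix T x assume x: "hom C x T A" and x0: "f \<cdot> x = zero T D"
    then have "f \<cdot> x = g \<cdot> zero T B"
      using arrs objs hom_objs[OF x] by simp
    then obtain h where h: "hom C h T P" "p \<cdot> h = x" "q \<cdot> h = zero T B"
      using pullback(4)[OF x hom_zero[OF _ objs(1)]] hom_objs[OF x] by blast
    then obtain s where s: "hom C s T K" "j \<cdot> s = h"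
      using kernel(4) by blast
    then have "(p \<cdot> j) \<cdot> s = x"
      using h(2) comp_assoc[OF s(1) j(2) pullback(1)] by simp
    then show "\<exists>s. hom C s T K \<and> (p \<cdot> j) \<cdot> s = x"
      using s(1) by blast
  next
    fix T h h' assume h: "hom C h T K" and h': "hom C h' T K" and eq: "(p \<cdot> j) \<cdot> h = (p \<cdot> j) \<cdot> h'"
    have "q \<cdot> (j \<cdot> h) = q \<cdot> (j \<cdot> h')"
      using h h' arrs objs by (simp add: comp_reassoc[OF kernel(3)] hom_def)
    then have "j \<cdot> h = j \<cdot> h'"
      using pullback(5)[OF hom_comp[OF h j(2)] hom_comp[OF h' j(2)]] eq h h' arrs by (simp add: hom_def)
    then show "h = h'"
      by (rule kernel(5)[OF h h'])
  qed
qed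

lemma bourn_normal_kernel:
  assumes "bourn_normal C n" and n: "hom C n X Y"
  obtains R r1 r2 k where "equivalence_relation C R r1 r2 Y" "hom C k X R"
    "is_kernel C k r1" "r2 \<cdot> k = n"
proof -
  have dom_cod: "Dom C n = X" "Cod C n = Y"
    using n unfolding hom_def by auto
  obtain R r1 r2 P p1 p2 m where R: "equivalence_relation C R r1 r2 Y"
    and P: "is_product C P p1 p2 X X" and m: "hom C m P R"
    and m2: "r2 \<cdot> m = n \<cdot> p2" and pb: "is_pullback C r1 n m p1"
    using assms(1) unfolding bourn_normal_def dom_cod by blast
  note rel = equivalence_relationD[OF R]
  note prod = is_productD[OF P]
  have X: "X \<in> Obj C"
    using hom_objs[OF n] by blast
  obtain j where j: "hom C j X P" "p1 \<cdot> j = zero X X" "p2 \<cdot> j = Id C X"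
    using prod(3)[OF hom_zero[OF X X] hom_id[OF X]] by blast
  have "Dom C m = P"
    using m unfolding hom_def by simp
  then have "is_kernel C (m \<cdot> j) r1"
    using pullback_leg_kernel[OF pb rel(1) n _ product_kernel[OF P j] j(1)] by blast
  moreover have "r2 \<cdot> (m \<cdot> j) = n"
    using j m n rel(2) prod(2) unfolding hom_def by (simp add: comp_reassoc[OF m2])
  ultimately show thesis
    using that R hom_comp[OF j(1) m] by blast
qed

end

locale finitely_complete_pointed_category = pointed_category +
  assumes finite_limits: "has_finite_limits C"
begin

lemma pullback_exists:
  assumes "hom C f A D" "hom C g B D"
  obtains p q where "is_pullback C f g p q"
proof -
  have "has_pullbacks C"
    using finite_limits unfolding has_finite_limits_def by blast
  moreover have "f \<in> Arr C \<and> g \<in> Arr C \<and> Cod C f = Cod C g"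
    using assms unfolding hom_def by auto
  ultimately show thesis
    using that unfolding has_pullbacks_def by blast
qed

lemma product_exists:
  assumes A: "A \<in> Obj C" and B: "B \<in> Obj C"
  obtains P p1 p2 where "is_product C P p1 p2 A B"
proof -
  obtain p q where pb: "is_pullback C (to_zero A) (to_zero B) p q"
    using pullback_exists[OF to_zero[OF A] to_zero[OF B]] .
  have "Dom C (to_zero A) = A" "Dom C (to_zero B) = B"
    using to_zero A B unfolding hom_def by auto
  note pullback = is_pullbackD[OF pb this refl]
  have "is_product C (Dom C p) p q A B"
    unfolding is_product_def
  proof (intro conjI allI impI)
    show "hom C p (Dom C p) A" "hom C q (Dom C p) B"
      using pullback(1,2) .
    fix T a b assume "hom C a T A \<and> hom C b T B"
    then have a: "hom C a T A" and b: "hom C b T B"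
      by auto
    have "to_zero A \<cdot> a = to_zero T" "to_zero B \<cdot> b = to_zero T"
      using to_zero_unique[OF hom_comp[OF a to_zero[OF A]]] to_zero_unique[OF hom_comp[OF b to_zero[OF B]]] .
    then obtain h where h: "hom C h T (Dom C p)" "p \<cdot> h = a" "q \<cdot> h = b"
      using pullback(4)[OF a b] by auto
    show "\<exists>!h. hom C h T (Dom C p) \<and> p \<cdot> h = a \<and> q \<cdot> h = b"
    proof (rule ex1I[of _ h])
      fix h' assume "hom C h' T (Dom C p) \<and> p \<cdot> h' = a \<and> q \<cdot> h' = b"
      then show "h' = h"
        by (intro pullback(5)[OF _ h(1)]) (use h in auto)
    qed (use h in blast)
  qed
  then show thesis
    by (rule that)
qed

lemma equalizer_exists:
  assumes a: "hom C a A B" and b: "hom C b A B"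
  obtains E e where "hom C e E A" "is_equalizer C e a b"
proof -
  have B: "B \<in> Obj C"
    using hom_objs[OF a] by blast
  obtain P p1 p2 where P: "is_product C P p1 p2 B B"
    using product_exists[OF B B] .
  note prod = is_productD[OF P]
  obtain ab where ab: "hom C ab A P" "p1 \<cdot> ab = a" "p2 \<cdot> ab = b"
    using prod(3)[OF a b] by blast
  obtain d where d: "hom C d B P" "p1 \<cdot> d = Id C B" "p2 \<cdot> d = Id C B"
    using prod(3)[OF hom_id[OF B] hom_id[OF B]] by blast
  obtain e q where pb: "is_pullback C ab d e q"
    using pullback_exists[OF ab(1) d(1)] .
  have "Dom C ab = A" "Dom C d = B"
    using ab(1) d(1) unfolding hom_def by auto
  note pullback = is_pullbackD[OF pb this refl]
  define E where "E = Dom C e"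
  note arrs = a[unfolded hom_def] b[unfolded hom_def] prod(1,2)[unfolded hom_def]
    ab(1)[unfolded hom_def] d(1)[unfolded hom_def] pullback(1,2)[unfolded hom_def]
  have "p1 \<cdot> (ab \<cdot> e) = p1 \<cdot> (d \<cdot> q)" "p2 \<cdot> (ab \<cdot> e) = p2 \<cdot> (d \<cdot> q)"
    using pullback(3) by simp_all
  then have ae: "a \<cdot> e = q" and be: "b \<cdot> e = q"
    using arrs B by (simp_all add: comp_reassoc[OF ab(2)] comp_reassoc[OF ab(3)]
        comp_reassoc[OF d(2)] comp_reassoc[OF d(3)])
  have "is_equalizer C e a b"
  proof (rule is_equalizerI[OF pullback(1)[folded E_def] a b])
    show "a \<cdot> e = b \<cdot> e"
      using ae be by simp
  next
    fix T x assume x: "hom C x T A" and eq: "a \<cdot> x = b \<cdot> x"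
    have "ab \<cdot> x = d \<cdot> (a \<cdot> x)"
      by (rule prod(4)[OF hom_comp[OF x ab(1)] hom_comp[OF hom_comp[OF x a] d(1)]])
        (use x eq arrs B in \<open>simp_all add: comp_reassoc[OF ab(2)] comp_reassoc[OF ab(3)]
          comp_reassoc[OF d(2)] comp_reassoc[OF d(3)] hom_def\<close>)
    then show "\<exists>h. hom C h T E \<and> e \<cdot> h = x"
      unfolding E_def using pullback(4)[OF x hom_comp[OF x a]] by blast
  next
    fix T h h' assume h: "hom C h T E" and h': "hom C h' T E" and eq: "e \<cdot> h = e \<cdot> h'"
    have "q \<cdot> h = q \<cdot> h'"
      using eq h h' arrs E_def by (simp add: comp_reassoc[OF ae, symmetric] hom_def)
    then show "h = h'"
      using pullback(5) h h' eq E_def by blast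
  qed
  then show thesis
    using that pullback(1) by blast
qed

lemma bourn_normalI:
  assumes R: "equivalence_relation C R r1 r2 Y" and m: "mono C m" "hom C m S Y"
    and k: "is_kernel C k r1" "hom C k S R" and k2: "r2 \<cdot> k = m"
  shows "bourn_normal C m"
proof -
  have S: "S \<in> Obj C"
    using hom_objs[OF m(2)] by blast
  obtain P p1 p2 where P: "is_product C P p1 p2 S S"
    using product_exists[OF S S] .
  note prod = is_productD[OF P]
  have "r1 \<cdot> k = zero S Y"
    using is_kernelD(3)[OF k(1)] k(2) equivalence_relationD(1)[OF R] unfolding hom_def by blast
  then obtain t where t: "hom C t P R" "r1 \<cdot> t = m \<cdot> p1" "r2 \<cdot> t = m \<cdot> p2"
    using zero_class_related[OF R k(2) _ k2 prod(1,2)] by blast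
  moreover have "Dom C m = S" "Cod C m = Y"
    using m(2) unfolding hom_def by auto
  ultimately show ?thesis
    unfolding bourn_normal_def using m(1) R P zero_class_pullback[OF R m k k2 P t] by metis
qed

end

locale pointed_protomodular_category = finitely_complete_pointed_category +
  assumes protomodular: "protomodular C"
begin

text \<open>This is where the split short five lemma is used: \<open>e\<close> is a morphism of split extensions
  from \<open>(k', p e, s')\<close> to \<open>(k, p, s)\<close> that is the identity on kernels and on codomains.\<close>

lemma kernel_section_subobject_iso:
  assumes k: "is_kernel C k p" "hom C k K A" and p: "hom C p A B" and s: "hom C s B A"
    and ps: "p \<cdot> s = Id C B" and e: "mono C e" "hom C e E A"
    and k': "hom C k' K E" "e \<cdot> k' = k" and s': "hom C s' B E" "e \<cdot> s' = s"
  shows "iso C e"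
proof -
  have K: "K \<in> Obj C" and B: "B \<in> Obj C"
    using hom_objs[OF k(2)] hom_objs[OF p] by auto
  note arrs = e(2)[unfolded hom_def] p[unfolded hom_def] k'(1)[unfolded hom_def]
    s'(1)[unfolded hom_def] k(2)[unfolded hom_def]
  have "(p \<cdot> e) \<cdot> s' = Id C B"
    using s' ps arrs by simp
  then show ?thesis
    using protomodular[unfolded protomodular_def, rule_format,
        of k' "p \<cdot> e" s' k p s "Id C K" e "Id C B"]
    using kernel_factor_through_mono[OF k p e k'] k ps s'(1) s hom_id[OF K] hom_id[OF B]
      k'(2) s'(2) arrs K B iso_Id[OF K] iso_Id[OF B]
    by (simp add: hom_def)
qed

lemma kernel_section_jointly_epic:
  assumes k: "is_kernel C k p" and p: "hom C p A B" and s: "hom C s B A" and ps: "p \<cdot> s = Id C B"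
    and a: "hom C a A W" and b: "hom C b A W" and ak: "a \<cdot> k = b \<cdot> k" and as: "a \<cdot> s = b \<cdot> s"
  shows "a = b"
proof -
  have "Dom C p = A" "Cod C p = B"
    using p unfolding hom_def by auto
  note kernel = is_kernelD[OF k refl this]
  obtain E e where e: "hom C e E A" and eq: "is_equalizer C e a b"
    using equalizer_exists[OF a b] .
  have "Dom C e = E" "Cod C e = A" "Cod C a = W"
    using e a unfolding hom_def by auto
  note equalizer = is_equalizerD[OF eq this]
  obtain k' where k': "hom C k' (Dom C k) E" "e \<cdot> k' = k"
    using equalizer(5)[OF kernel(1) ak] by blast
  obtain s' where s': "hom C s' B E" "e \<cdot> s' = s"
    using equalizer(5)[OF s as] by blast
  have "iso C e"
    by (rule kernel_section_subobject_iso[OF k kernel(1) p s ps monoI[OF e equalizer(6)] e k' s'])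
  then obtain g where g: "hom C g A E" "e \<cdot> g = Id C A"
    unfolding iso_def using e unfolding hom_def by auto
  have "a = (a \<cdot> e) \<cdot> g"
    using g comp_assoc[OF g(1) e a] comp_id_right[OF a] by simp
  also have "\<dots> = (b \<cdot> e) \<cdot> g"
    using equalizer(4) by simp
  also have "\<dots> = b"
    using g comp_assoc[OF g(1) e b] comp_id_right[OF b] by simp
  finally show ?thesis .
qed

end

text \<open>A generalised element \<open>z\<close> of \<open>R\<close> is \<^emph>\<open>restricted\<close> if \<open>\<rho> z\<close>
  and \<open>\<rho> \<delta> r\<^sub>1 z\<close> agree modulo \<open>S\<close>, i.e. after applying \<open>f\<close>. The restricted part \<open>Q\<close> of \<open>R\<close>,
  the equalizer \<open>e\<close>, is an equivalence relation on \<open>Y\<close> whose zero class is \<open>n u\<close>.\<close>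

locale kernel_restriction = pointed_protomodular_category +
  fixes u f S X B n Y R r\<^sub>1 r\<^sub>2 k \<rho> \<delta> Q e
  assumes u_kernel: "is_kernel C u f" and u: "hom C u S X" and f: "hom C f X B"
    and n_mono: "mono C n" and n: "hom C n X Y"
    and R: "equivalence_relation C R r\<^sub>1 r\<^sub>2 Y"
    and k_kernel: "is_kernel C k r\<^sub>1" and k: "hom C k X R" and r\<^sub>2_k: "r\<^sub>2 \<cdot> k = n"
    and \<rho>: "hom C \<rho> R X" and \<rho>_k: "\<rho> \<cdot> k = Id C X"
    and \<delta>: "hom C \<delta> Y R" and r\<^sub>1_\<delta>: "r\<^sub>1 \<cdot> \<delta> = Id C Y" and r\<^sub>2_\<delta>: "r\<^sub>2 \<cdot> \<delta> = Id C Y"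
    and e: "hom C e Q R" and equalizer: "is_equalizer C e (f \<cdot> \<rho>) (f \<cdot> (\<rho> \<cdot> (\<delta> \<cdot> r\<^sub>1)))"
begin

lemmas rel = equivalence_relationD[OF R]

lemma objs: "S \<in> Obj C" "X \<in> Obj C" "B \<in> Obj C" "Y \<in> Obj C" "R \<in> Obj C" "Q \<in> Obj C"
  using hom_objs[OF u] hom_objs[OF f] hom_objs[OF n] hom_objs[OF e] by auto

lemmas arrs = u[unfolded hom_def] f[unfolded hom_def] n[unfolded hom_def] k[unfolded hom_def]
  \<rho>[unfolded hom_def] \<delta>[unfolded hom_def] e[unfolded hom_def] rel(1,2)[unfolded hom_def]

lemma dom_cod_kernels: "Dom C u = S" "Dom C f = X" "Cod C f = B" "Dom C k = X" "Dom C r\<^sub>1 = R" "Cod C r\<^sub>1 = Y"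
  using arrs by simp_all

lemmas u_kernelD = is_kernelD[OF u_kernel dom_cod_kernels(1-3)]
lemmas k_kernelD = is_kernelD[OF k_kernel dom_cod_kernels(4-6)]
lemmas f_u = u_kernelD(3)
lemmas r\<^sub>1_k = k_kernelD(3)

lemma n_u_mono: "mono C (n \<cdot> u)"
  by (rule mono_comp[OF kernel_mono[OF u_kernel] u n_mono n])

lemma dom_cod_equalizer: "Dom C e = Q" "Cod C e = R" "Cod C (f \<cdot> \<rho>) = B"
  using arrs by simp_all

lemmas equalizerD = is_equalizerD[OF equalizer dom_cod_equalizer]
lemmas e_cancel = equalizerD(6)

definition restricted where
  "restricted z \<longleftrightarrow> f \<cdot> (\<rho> \<cdot> z) = f \<cdot> (\<rho> \<cdot> (\<delta> \<cdot> (r\<^sub>1 \<cdot> z)))"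

lemma restricted_factors:
  assumes z: "hom C z T R" and "restricted z"
  obtains h where "hom C h T Q" "e \<cdot> h = z"
proof -
  have "(f \<cdot> \<rho>) \<cdot> z = (f \<cdot> (\<rho> \<cdot> (\<delta> \<cdot> r\<^sub>1))) \<cdot> z"
    using assms arrs unfolding restricted_def by (simp add: hom_def)
  then show thesis
    using equalizerD(5)[OF z] that by blast
qed

lemma restricted_comp:
  assumes z: "hom C z T R" and h: "hom C h T' T" and "restricted z"
  shows "restricted (z \<cdot> h)"
  using arg_cong[OF assms(3)[unfolded restricted_def], of "\<lambda>x. x \<cdot> h"] z h arrs
  unfolding restricted_def by (simp add: hom_def)

lemma restricted_e: "restricted e"
  using equalizerD(4) arrs unfolding restricted_def by simp

lemma restricted_\<delta>: "hom C a T Y \<Longrightarrow> restricted (\<delta> \<cdot> a)"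
  using arrs unfolding restricted_def by (simp add: comp_reassoc[OF r\<^sub>1_\<delta>] hom_def)

lemma restricted_k_u: "restricted (k \<cdot> u)"
  using arrs objs f_u unfolding restricted_def
  by (simp add: comp_reassoc[OF \<rho>_k] comp_reassoc[OF r\<^sub>1_k])

lemma restricted_jointly_epic:
  assumes kernel: "is_kernel C j p" and p: "hom C p A D" and s: "hom C s D A" and ps: "p \<cdot> s = Id C D"
    and z: "hom C z A R" and "restricted (z \<cdot> j)" "restricted (z \<cdot> s)"
  shows "restricted z"
proof -
  have "Dom C p = A" "Cod C p = D"
    using p unfolding hom_def by auto
  note j = is_kernelD(1)[OF kernel refl this]
  have "f \<cdot> (\<rho> \<cdot> z) = f \<cdot> (\<rho> \<cdot> (\<delta> \<cdot> (r\<^sub>1 \<cdot> z)))"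
  proof (rule kernel_section_jointly_epic[OF kernel p s ps])
    show "hom C (f \<cdot> (\<rho> \<cdot> z)) A B" "hom C (f \<cdot> (\<rho> \<cdot> (\<delta> \<cdot> (r\<^sub>1 \<cdot> z)))) A B"
      using z arrs by (simp_all add: hom_def)
    show "(f \<cdot> (\<rho> \<cdot> z)) \<cdot> j = (f \<cdot> (\<rho> \<cdot> (\<delta> \<cdot> (r\<^sub>1 \<cdot> z)))) \<cdot> j"
      using assms(6) z j arrs unfolding restricted_def by (simp add: hom_def)
    show "(f \<cdot> (\<rho> \<cdot> z)) \<cdot> s = (f \<cdot> (\<rho> \<cdot> (\<delta> \<cdot> (r\<^sub>1 \<cdot> z)))) \<cdot> s"
      using assms(7) z s arrs unfolding restricted_def by (simp add: hom_def)
  qed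
  then show ?thesis
    unfolding restricted_def .
qed

definition \<sigma> where "\<sigma> = (SOME s. hom C s R R \<and> r\<^sub>1 \<cdot> s = r\<^sub>2 \<and> r\<^sub>2 \<cdot> s = r\<^sub>1)"

lemma \<sigma>: "hom C \<sigma> R R" "r\<^sub>1 \<cdot> \<sigma> = r\<^sub>2" "r\<^sub>2 \<cdot> \<sigma> = r\<^sub>1"
proof -
  have "\<exists>s. hom C s R R \<and> r\<^sub>1 \<cdot> s = r\<^sub>2 \<and> r\<^sub>2 \<cdot> s = r\<^sub>1"
    using rel(5)[OF hom_id[OF objs(5)]] arrs objs by simp
  then show "hom C \<sigma> R R" "r\<^sub>1 \<cdot> \<sigma> = r\<^sub>2" "r\<^sub>2 \<cdot> \<sigma> = r\<^sub>1"
    unfolding \<sigma>_def by (metis (mono_tags, lifting) someI_ex)+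
qed

lemma \<sigma>_\<delta>: "\<sigma> \<cdot> \<delta> = \<delta>"
  by (rule rel(3)[OF hom_comp[OF \<delta> \<sigma>(1)] \<delta>])
    (use arrs \<sigma> in \<open>simp_all add: comp_reassoc[OF \<sigma>(2)] comp_reassoc[OF \<sigma>(3)] r\<^sub>1_\<delta> r\<^sub>2_\<delta> hom_def\<close>)

text \<open>The element \<open>(n u, 0)\<close> of \<open>R\<close> is restricted: on \<open>S \<times> S\<close>, the map \<open>(s, s') \<mapsto> (n u s, n u s')\<close>
  is restricted on \<open>(0, s')\<close> and on the diagonal, hence everywhere.\<close>

lemma restricted_\<sigma>_k_u: "restricted (\<sigma> \<cdot> (k \<cdot> u))"
proof -
  obtain P p\<^sub>1 p\<^sub>2 where P: "is_product C P p\<^sub>1 p\<^sub>2 S S"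
    using product_exists[OF objs(1,1)] .
  note prod = is_productD[OF P]
  obtain z where z: "hom C z P R" "r\<^sub>1 \<cdot> z = n \<cdot> (u \<cdot> p\<^sub>1)" "r\<^sub>2 \<cdot> z = n \<cdot> (u \<cdot> p\<^sub>2)"
    using zero_class_related[OF R k r\<^sub>1_k r\<^sub>2_k hom_comp[OF prod(1) u] hom_comp[OF prod(2) u]] .
  obtain j\<^sub>0\<^sub>1 where j\<^sub>0\<^sub>1: "hom C j\<^sub>0\<^sub>1 S P" "p\<^sub>1 \<cdot> j\<^sub>0\<^sub>1 = zero S S" "p\<^sub>2 \<cdot> j\<^sub>0\<^sub>1 = Id C S"
    using prod(3)[OF hom_zero[OF objs(1,1)] hom_id[OF objs(1)]] by blast
  obtain j\<^sub>1\<^sub>0 where j\<^sub>1\<^sub>0: "hom C j\<^sub>1\<^sub>0 S P" "p\<^sub>1 \<cdot> j\<^sub>1\<^sub>0 = Id C S" "p\<^sub>2 \<cdot> j\<^sub>1\<^sub>0 = zero S S"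
    using prod(3)[OF hom_id[OF objs(1)] hom_zero[OF objs(1,1)]] by blast
  obtain j\<^sub>1\<^sub>1 where j\<^sub>1\<^sub>1: "hom C j\<^sub>1\<^sub>1 S P" "p\<^sub>1 \<cdot> j\<^sub>1\<^sub>1 = Id C S" "p\<^sub>2 \<cdot> j\<^sub>1\<^sub>1 = Id C S"
    using prod(3)[OF hom_id[OF objs(1)] hom_id[OF objs(1)]] by blast
  note arrs' = arrs prod(1,2)[unfolded hom_def] z(1)[unfolded hom_def] j\<^sub>0\<^sub>1(1)[unfolded hom_def]
    j\<^sub>1\<^sub>0(1)[unfolded hom_def] j\<^sub>1\<^sub>1(1)[unfolded hom_def] \<sigma>(1)[unfolded hom_def]
  note z_simps = comp_reassoc[OF z(2)] comp_reassoc[OF z(3)] comp_reassoc[OF r\<^sub>2_k] comp_reassoc[OF r\<^sub>1_k]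
    comp_reassoc[OF r\<^sub>1_\<delta>] comp_reassoc[OF r\<^sub>2_\<delta>] comp_reassoc[OF \<sigma>(2)] comp_reassoc[OF \<sigma>(3)]
    j\<^sub>0\<^sub>1(2,3) j\<^sub>1\<^sub>0(2,3) j\<^sub>1\<^sub>1(2,3)
  have "z \<cdot> j\<^sub>0\<^sub>1 = k \<cdot> u"
    by (rule rel(3)[OF hom_comp[OF j\<^sub>0\<^sub>1(1) z(1)] hom_comp[OF u k]]) (use arrs' objs in \<open>simp_all add: z_simps\<close>)
  moreover have "z \<cdot> j\<^sub>1\<^sub>1 = \<delta> \<cdot> (n \<cdot> u)"
    by (rule rel(3)[OF hom_comp[OF j\<^sub>1\<^sub>1(1) z(1)] hom_comp[OF hom_comp[OF u n] \<delta>]])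
      (use arrs' objs in \<open>simp_all add: z_simps\<close>)
  ultimately have "restricted z"
    using restricted_jointly_epic[OF product_kernel[OF P j\<^sub>0\<^sub>1] prod(1) j\<^sub>1\<^sub>1(1,2) z(1)]
      restricted_k_u restricted_\<delta>[OF hom_comp[OF u n]] by simp
  moreover have "\<sigma> \<cdot> (k \<cdot> u) = z \<cdot> j\<^sub>1\<^sub>0"
    by (rule rel(3)[OF hom_comp[OF hom_comp[OF u k] \<sigma>(1)] hom_comp[OF j\<^sub>1\<^sub>0(1) z(1)]])
      (use arrs' objs in \<open>simp_all add: z_simps\<close>)
  ultimately show ?thesis
    using restricted_comp[OF z(1) j\<^sub>1\<^sub>0(1)] by simp
qed

definition k\<^sub>Q where "k\<^sub>Q = (SOME h. hom C h S Q \<and> e \<cdot> h = k \<cdot> u)"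
definition \<delta>\<^sub>Q where "\<delta>\<^sub>Q = (SOME h. hom C h Y Q \<and> e \<cdot> h = \<delta>)"

lemma k\<^sub>Q: "hom C k\<^sub>Q S Q" "e \<cdot> k\<^sub>Q = k \<cdot> u"
proof -
  obtain h where "hom C h S Q" "e \<cdot> h = k \<cdot> u"
    using restricted_factors[OF hom_comp[OF u k] restricted_k_u] .
  then show "hom C k\<^sub>Q S Q" "e \<cdot> k\<^sub>Q = k \<cdot> u"
    unfolding k\<^sub>Q_def by (metis (mono_tags, lifting) someI_ex)+
qed

lemma \<delta>\<^sub>Q: "hom C \<delta>\<^sub>Q Y Q" "e \<cdot> \<delta>\<^sub>Q = \<delta>"
proof -
  have "restricted \<delta>"
    using restricted_\<delta>[OF hom_id[OF objs(4)]] arrs by simp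
  then obtain h where "hom C h Y Q" "e \<cdot> h = \<delta>"
    using restricted_factors[OF \<delta>] by blast
  then show "hom C \<delta>\<^sub>Q Y Q" "e \<cdot> \<delta>\<^sub>Q = \<delta>"
    unfolding \<delta>\<^sub>Q_def by (metis (mono_tags, lifting) someI_ex)+
qed

lemmas arrs\<^sub>Q = arrs k\<^sub>Q(1)[unfolded hom_def] \<delta>\<^sub>Q(1)[unfolded hom_def] \<sigma>(1)[unfolded hom_def]

lemmas simps\<^sub>Q = comp_reassoc[OF k\<^sub>Q(2)] comp_reassoc[OF \<delta>\<^sub>Q(2)] comp_reassoc[OF r\<^sub>1_k] comp_reassoc[OF r\<^sub>2_k]
  comp_reassoc[OF r\<^sub>1_\<delta>] comp_reassoc[OF r\<^sub>2_\<delta>] comp_reassoc[OF \<sigma>(2)] comp_reassoc[OF \<sigma>(3)]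
  comp_reassoc[OF \<rho>_k] k\<^sub>Q(2) \<delta>\<^sub>Q(2) r\<^sub>1_k r\<^sub>2_k r\<^sub>1_\<delta> r\<^sub>2_\<delta> \<sigma>(2,3) \<rho>_k \<sigma>_\<delta> f_u

lemma r\<^sub>1_e_\<delta>\<^sub>Q: "(r\<^sub>1 \<cdot> e) \<cdot> \<delta>\<^sub>Q = Id C Y"
  using arrs\<^sub>Q by (simp add: simps\<^sub>Q)

lemma r\<^sub>2_e_k\<^sub>Q: "(r\<^sub>2 \<cdot> e) \<cdot> k\<^sub>Q = n \<cdot> u"
  using arrs\<^sub>Q by (simp add: simps\<^sub>Q)

lemma k\<^sub>Q_kernel: "is_kernel C k\<^sub>Q (r\<^sub>1 \<cdot> e)"
proof (rule is_kernelI[OF k\<^sub>Q(1) hom_comp[OF e rel(1)]])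
  show "(r\<^sub>1 \<cdot> e) \<cdot> k\<^sub>Q = zero S Y"
    using arrs\<^sub>Q objs by (simp add: simps\<^sub>Q)
next
  fix T x assume x: "hom C x T Q" and x0: "(r\<^sub>1 \<cdot> e) \<cdot> x = zero T Y"
  have T: "T \<in> Obj C"
    using hom_objs[OF x] by blast
  have "r\<^sub>1 \<cdot> (e \<cdot> x) = zero T Y"
    using x0 x arrs by (simp add: hom_def)
  then obtain h where h: "hom C h T X" "k \<cdot> h = e \<cdot> x"
    using k_kernelD(4)[OF hom_comp[OF x e]] by blast
  have "f \<cdot> h = f \<cdot> (\<rho> \<cdot> (e \<cdot> x))"
    using h(1) arrs by (simp add: comp_reassoc[OF \<rho>_k] hom_def flip: h(2))
  also have "\<dots> = f \<cdot> (\<rho> \<cdot> (\<delta> \<cdot> (r\<^sub>1 \<cdot> (e \<cdot> x))))"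
    using restricted_comp[OF e x restricted_e] unfolding restricted_def .
  also have "\<dots> = zero T B"
    using \<open>r\<^sub>1 \<cdot> (e \<cdot> x) = zero T Y\<close> arrs objs T by simp
  finally obtain s where s: "hom C s T S" "u \<cdot> s = h"
    using u_kernelD(4)[OF h(1)] by blast
  have "e \<cdot> (k\<^sub>Q \<cdot> s) = e \<cdot> x"
    using s h arrs\<^sub>Q by (simp add: simps\<^sub>Q hom_def)
  then show "\<exists>s. hom C s T S \<and> k\<^sub>Q \<cdot> s = x"
    using e_cancel[OF hom_comp[OF s(1) k\<^sub>Q(1)] x] s(1) by blast
next
  fix T h h' assume h: "hom C h T S" and h': "hom C h' T S" and eq: "k\<^sub>Q \<cdot> h = k\<^sub>Q \<cdot> h'"
  have "(n \<cdot> u) \<cdot> h = (n \<cdot> u) \<cdot> h'"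
    using arg_cong[OF eq, of "\<lambda>x. (r\<^sub>2 \<cdot> e) \<cdot> x"] h h' arrs\<^sub>Q by (simp add: simps\<^sub>Q hom_def)
  then show "h = h'"
    by (rule monoD[OF n_u_mono hom_comp[OF u n] h h'])
qed

lemma Q_jointly_monic:
  assumes x: "hom C x T Q" and y: "hom C y T Q"
    and "(r\<^sub>1 \<cdot> e) \<cdot> x = (r\<^sub>1 \<cdot> e) \<cdot> y" "(r\<^sub>2 \<cdot> e) \<cdot> x = (r\<^sub>2 \<cdot> e) \<cdot> y"
  shows "x = y"
proof (rule e_cancel[OF x y])
  show "e \<cdot> x = e \<cdot> y"
    by (rule rel(3)[OF hom_comp[OF x e] hom_comp[OF y e]]) (use assms arrs in \<open>simp_all add: hom_def\<close>)
qed

lemma Q_reflexive: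
  assumes a: "hom C a T Y"
  shows "\<exists>d. hom C d T Q \<and> (r\<^sub>1 \<cdot> e) \<cdot> d = a \<and> (r\<^sub>2 \<cdot> e) \<cdot> d = a"
proof -
  have "(r\<^sub>1 \<cdot> e) \<cdot> (\<delta>\<^sub>Q \<cdot> a) = a" "(r\<^sub>2 \<cdot> e) \<cdot> (\<delta>\<^sub>Q \<cdot> a) = a"
    using a arrs\<^sub>Q by (simp_all add: simps\<^sub>Q hom_def)
  then show ?thesis
    using hom_comp[OF a \<delta>\<^sub>Q(1)] by blast
qed

text \<open>Symmetry reduces to \<open>\<sigma> e\<close> being restricted, which it is on the kernel \<open>k\<^sub>Q\<close> of
  \<open>r\<^sub>1 e\<close> and on its section \<open>\<delta>\<^sub>Q\<close>.\<close>

lemma Q_symmetric: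
  assumes x: "hom C x T Q"
  shows "\<exists>y. hom C y T Q \<and> (r\<^sub>1 \<cdot> e) \<cdot> y = (r\<^sub>2 \<cdot> e) \<cdot> x \<and> (r\<^sub>2 \<cdot> e) \<cdot> y = (r\<^sub>1 \<cdot> e) \<cdot> x"
proof -
  have "restricted (\<sigma> \<cdot> e)"
  proof (rule restricted_jointly_epic[OF k\<^sub>Q_kernel hom_comp[OF e rel(1)] \<delta>\<^sub>Q(1) r\<^sub>1_e_\<delta>\<^sub>Q])
    show "hom C (\<sigma> \<cdot> e) Q R"
      by (rule hom_comp[OF e \<sigma>(1)])
    show "restricted ((\<sigma> \<cdot> e) \<cdot> k\<^sub>Q)"
      using restricted_\<sigma>_k_u arrs\<^sub>Q by (simp add: simps\<^sub>Q)
    show "restricted ((\<sigma> \<cdot> e) \<cdot> \<delta>\<^sub>Q)"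
      using restricted_\<delta>[OF hom_id[OF objs(4)]] arrs\<^sub>Q objs by (simp add: simps\<^sub>Q)
  qed
  then have "restricted (\<sigma> \<cdot> (e \<cdot> x))"
    using restricted_comp[OF hom_comp[OF e \<sigma>(1)] x] x arrs\<^sub>Q by (simp add: hom_def)
  then obtain y where y: "hom C y T Q" "e \<cdot> y = \<sigma> \<cdot> (e \<cdot> x)"
    using restricted_factors[OF hom_comp[OF hom_comp[OF x e] \<sigma>(1)]] by blast
  then have "(r\<^sub>1 \<cdot> e) \<cdot> y = (r\<^sub>2 \<cdot> e) \<cdot> x" "(r\<^sub>2 \<cdot> e) \<cdot> y = (r\<^sub>1 \<cdot> e) \<cdot> x"
    using x arrs\<^sub>Q by (simp_all add: simps\<^sub>Q hom_def)
  then show ?thesis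
    using y(1) by blast
qed

text \<open>For transitivity, the composite \<open>\<tau>\<close> of the generic composable pair of \<open>Q\<close> is restricted,
  since it is so on the kernel \<open>(0, k\<^sub>Q)\<close> and on the section \<open>(1, \<delta>\<^sub>Q r\<^sub>2 e)\<close> of the first
  projection.\<close>

lemma restricted_composite:
  assumes pb: "is_pullback C (r\<^sub>2 \<cdot> e) (r\<^sub>1 \<cdot> e) w\<^sub>1 w\<^sub>2" and W: "Dom C w\<^sub>1 = W"
    and \<tau>: "hom C \<tau> W R" "r\<^sub>1 \<cdot> \<tau> = r\<^sub>1 \<cdot> (e \<cdot> w\<^sub>1)" "r\<^sub>2 \<cdot> \<tau> = r\<^sub>2 \<cdot> (e \<cdot> w\<^sub>2)"
  shows "restricted \<tau>"
proof -
  have r\<^sub>1_e: "hom C (r\<^sub>1 \<cdot> e) Q Y" and r\<^sub>2_e: "hom C (r\<^sub>2 \<cdot> e) Q Y"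
    using hom_comp[OF e rel(1)] hom_comp[OF e rel(2)] .
  have "Dom C (r\<^sub>2 \<cdot> e) = Q" "Dom C (r\<^sub>1 \<cdot> e) = Q"
    using arrs by simp_all
  note pullback = is_pullbackD[OF pb this W]
  note arrs\<^sub>W = arrs\<^sub>Q pullback(1,2)[unfolded hom_def] \<tau>(1)[unfolded hom_def]
  have "(r\<^sub>2 \<cdot> e) \<cdot> Id C Q = (r\<^sub>1 \<cdot> e) \<cdot> (\<delta>\<^sub>Q \<cdot> (r\<^sub>2 \<cdot> e))"
    using arrs\<^sub>Q objs by (simp add: simps\<^sub>Q)
  then obtain s where s: "hom C s Q W" "w\<^sub>1 \<cdot> s = Id C Q" "w\<^sub>2 \<cdot> s = \<delta>\<^sub>Q \<cdot> (r\<^sub>2 \<cdot> e)"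
    using pullback(4)[OF hom_id[OF objs(6)] hom_comp[OF r\<^sub>2_e \<delta>\<^sub>Q(1)]] by blast
  have "(r\<^sub>2 \<cdot> e) \<cdot> zero S Q = (r\<^sub>1 \<cdot> e) \<cdot> k\<^sub>Q"
    using arrs\<^sub>Q objs by (simp add: simps\<^sub>Q)
  then obtain j where j: "hom C j S W" "w\<^sub>1 \<cdot> j = zero S Q" "w\<^sub>2 \<cdot> j = k\<^sub>Q"
    using pullback(4)[OF hom_zero[OF objs(1,6)] k\<^sub>Q(1)] by blast
  note arrs\<^sub>W = arrs\<^sub>W s(1)[unfolded hom_def] j(1)[unfolded hom_def]
  note simps\<^sub>W = simps\<^sub>Q comp_reassoc[OF \<tau>(2)] comp_reassoc[OF \<tau>(3)] comp_reassoc[OF s(2)]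
    comp_reassoc[OF s(3)] comp_reassoc[OF j(2)] comp_reassoc[OF j(3)] s(2,3) j(2,3)
  have "\<tau> \<cdot> s = e"
    by (rule rel(3)[OF hom_comp[OF s(1) \<tau>(1)] e]) (use arrs\<^sub>W objs in \<open>simp_all add: simps\<^sub>W\<close>)
  moreover have "\<tau> \<cdot> j = k \<cdot> u"
    by (rule rel(3)[OF hom_comp[OF j(1) \<tau>(1)] hom_comp[OF u k]]) (use arrs\<^sub>W objs in \<open>simp_all add: simps\<^sub>W\<close>)
  moreover have "is_kernel C j w\<^sub>1"
    by (rule pullback_kernel_stable[OF pb r\<^sub>2_e r\<^sub>1_e W k\<^sub>Q_kernel k\<^sub>Q(1) j])
  ultimately show ?thesis
    using restricted_jointly_epic[OF _ pullback(1) s(1,2) \<tau>(1)] restricted_e restricted_k_u by simp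
qed

lemma Q_transitive:
  assumes x: "hom C x T Q" and y: "hom C y T Q" and xy: "(r\<^sub>2 \<cdot> e) \<cdot> x = (r\<^sub>1 \<cdot> e) \<cdot> y"
  shows "\<exists>z. hom C z T Q \<and> (r\<^sub>1 \<cdot> e) \<cdot> z = (r\<^sub>1 \<cdot> e) \<cdot> x \<and> (r\<^sub>2 \<cdot> e) \<cdot> z = (r\<^sub>2 \<cdot> e) \<cdot> y"
proof -
  obtain w\<^sub>1 w\<^sub>2 where pb: "is_pullback C (r\<^sub>2 \<cdot> e) (r\<^sub>1 \<cdot> e) w\<^sub>1 w\<^sub>2"
    using pullback_exists[OF hom_comp[OF e rel(2)] hom_comp[OF e rel(1)]] .
  define W where "W = Dom C w\<^sub>1"
  have "Dom C (r\<^sub>2 \<cdot> e) = Q" "Dom C (r\<^sub>1 \<cdot> e) = Q"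
    using arrs by simp_all
  note pullback = is_pullbackD[OF pb this W_def[symmetric]]
  note arrs\<^sub>W = arrs pullback(1,2)[unfolded hom_def]
  have "r\<^sub>2 \<cdot> (e \<cdot> w\<^sub>1) = r\<^sub>1 \<cdot> (e \<cdot> w\<^sub>2)"
    using pullback(3) arrs\<^sub>W by simp
  then obtain \<tau> where \<tau>: "hom C \<tau> W R" "r\<^sub>1 \<cdot> \<tau> = r\<^sub>1 \<cdot> (e \<cdot> w\<^sub>1)" "r\<^sub>2 \<cdot> \<tau> = r\<^sub>2 \<cdot> (e \<cdot> w\<^sub>2)"
    using rel(6)[OF hom_comp[OF pullback(1) e] hom_comp[OF pullback(2) e]] by blast
  obtain h where h: "hom C h T W" "w\<^sub>1 \<cdot> h = x" "w\<^sub>2 \<cdot> h = y"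
    using pullback(4)[OF x y xy] by blast
  have "restricted (\<tau> \<cdot> h)"
    by (rule restricted_comp[OF \<tau>(1) h(1) restricted_composite[OF pb W_def[symmetric] \<tau>]])
  then obtain z where z: "hom C z T Q" "e \<cdot> z = \<tau> \<cdot> h"
    using restricted_factors[OF hom_comp[OF h(1) \<tau>(1)]] by blast
  have "(r\<^sub>1 \<cdot> e) \<cdot> z = (r\<^sub>1 \<cdot> e) \<cdot> x" "(r\<^sub>2 \<cdot> e) \<cdot> z = (r\<^sub>2 \<cdot> e) \<cdot> y"
    using z h arrs\<^sub>W \<tau>(1) by (simp_all add: comp_reassoc[OF \<tau>(2)] comp_reassoc[OF \<tau>(3)] hom_def flip: h(2,3))
  then show ?thesis
    using z(1) by blast
qed

lemma Q_equivalence_relation: "equivalence_relation C Q (r\<^sub>1 \<cdot> e) (r\<^sub>2 \<cdot> e) Y"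
  by (rule equivalence_relationI[OF hom_comp[OF e rel(1)] hom_comp[OF e rel(2)]
        Q_jointly_monic Q_reflexive Q_symmetric Q_transitive])

lemma bourn_normal_n_u: "bourn_normal C (n \<cdot> u)"
  by (rule bourn_normalI[OF Q_equivalence_relation n_u_mono hom_comp[OF u n] k\<^sub>Q_kernel k\<^sub>Q(1) r\<^sub>2_e_k\<^sub>Q])

end

context pointed_protomodular_category
begin

lemma bourn_normal_comp_kernel:
  assumes X: "proto_complete C X" and u: "is_kernel C u f" "Cod C u = X"
    and n: "bourn_normal C n" "Dom C n = X"
  shows "bourn_normal C (n \<cdot> u)"
proof -
  have n_mono: "mono C n"
    using n(1) unfolding bourn_normal_def by blast
  have hom_n: "hom C n X (Cod C n)"
    using n_mono n(2) unfolding mono_def hom_def by blast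
  have "Dom C f = X"
    using u unfolding is_kernel_def by auto
  note u_kernel = is_kernelD[OF u(1) refl this refl]
  obtain R r\<^sub>1 r\<^sub>2 k where R: "equivalence_relation C R r\<^sub>1 r\<^sub>2 (Cod C n)" and k: "hom C k X R"
    and k_kernel: "is_kernel C k r\<^sub>1" and r\<^sub>2_k: "r\<^sub>2 \<cdot> k = n"
    using bourn_normal_kernel[OF n(1) hom_n] .
  note rel = equivalence_relationD[OF R]
  obtain \<delta> where \<delta>: "hom C \<delta> (Cod C n) R" "r\<^sub>1 \<cdot> \<delta> = Id C (Cod C n)" "r\<^sub>2 \<cdot> \<delta> = Id C (Cod C n)"
    using rel(4)[OF hom_id] hom_objs[OF hom_n] by blast
  have "split_epi C r\<^sub>1"
    unfolding split_epi_def using \<delta> rel(1) unfolding hom_def by auto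
  then have "split_mono C k"
    using X k_kernel k unfolding proto_complete_def protosplit_mono_def hom_def by blast
  then obtain \<rho> where \<rho>: "hom C \<rho> R X" "\<rho> \<cdot> k = Id C X"
    using k unfolding split_mono_def hom_def by auto
  have "hom C (f \<cdot> \<rho>) R (Cod C f)" "hom C (f \<cdot> (\<rho> \<cdot> (\<delta> \<cdot> r\<^sub>1))) R (Cod C f)"
    using hom_comp \<rho>(1) \<delta>(1) rel(1) u_kernel(2) by blast+
  then obtain Q e where "hom C e Q R" "is_equalizer C e (f \<cdot> \<rho>) (f \<cdot> (\<rho> \<cdot> (\<delta> \<cdot> r\<^sub>1)))"
    using equalizer_exists by blast
  then interpret kernel_restriction C u f "Dom C u" X "Cod C f" n "Cod C n" R r\<^sub>1 r\<^sub>2 k \<rho> \<delta> Q e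
    using u_kernel(1,2) u(1) n_mono hom_n R k_kernel k r\<^sub>2_k \<rho> \<delta> by unfold_locales
  show ?thesis
    by (rule bourn_normal_n_u)
qed

end

theorem proposition5p4:
  fixes C :: "('o, 'a) category" and u :: 'a and X :: 'o
  assumes "is_category C"
    and "pointed C"
    and "has_finite_limits C"
    and "protomodular C"
    and "proto_complete C X"
    and "normal_mono C u"
    and "Cod C u = X"
  shows "characteristic_mono C u"
proof -
  interpret pointed_protomodular_category C
    using assms(1-4) by unfold_locales
  obtain f where "is_kernel C u f"
    using assms(6) unfolding normal_mono_def by blast
  then show ?thesis
    unfolding characteristic_mono_def
    using kernel_mono bourn_normal_comp_kernel[OF assms(5)] assms(7) by blast
qed

end
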